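(* Let $L$ be a regular locale without isolated points, and let $a,b\in L$ with $a^*=0$ and $b\ne0$. Then there exist $c,d\in L$ with $0\ne c\le b$, $0\ne d\le b$, $c\wedge d=0$, and $a\vee c^*=1=a\vee d^*$.
   Context: A frame (locale) $L$ is a complete lattice in which finite meets distribute over arbitrary joins; $x\to y$ is the Heyting implication and $x^*=x\to0$ the pseudocomplement. $L$ is regular if $x=\bigvee\{y\in L\mid y\prec x\}$ for every $x$, where $y\prec x$ means $y^*\vee x=1$. A sublocale of $L$ is a subset closed under arbitrary meets such that $x\to s$ lies in it whenever $s$ does; the open sublocale of $x$ is $\mathfrak{o}(x)=\{x\to y\mid y\in L\}$. A point of $L$ is $p\ne1$ such that $x\wedge y\le p$ implies $x\le p$ or $y\le p$; it is isolated if the sublocale $\{1,p\}$ equals $\mathfrak{o}(x)$ for some $x\in L$. *)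

theory Defs
  imports Main
begin

definition frame :: "'a::complete_lattice itself \<Rightarrow> bool" where
  "frame _ \<longleftrightarrow> (\<forall>(x::'a) A. inf x (Sup A) = Sup ((\<lambda>y. inf x y) ` A))"

definition frm_imp :: "'a::complete_lattice \<Rightarrow> 'a \<Rightarrow> 'a" where
  "frm_imp x y = Sup {z. inf z x \<le> y}"

definition pc :: "'a::complete_lattice \<Rightarrow> 'a" where
  "pc x = frm_imp x bot"

definition rather_below :: "'a::complete_lattice \<Rightarrow> 'a \<Rightarrow> bool" where
  "rather_below y x \<longleftrightarrow> sup (pc y) x = top"

definition regular_frame :: "'a::complete_lattice itself \<Rightarrow> bool" where
  "regular_frame _ \<longleftrightarrow> (\<forall>x::'a. x = Sup {y. rather_below y x})"

definition sublocale_of :: "'a::complete_lattice set \<Rightarrow> bool" where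
  "sublocale_of S \<longleftrightarrow> (\<forall>A. A \<subseteq> S \<longrightarrow> Inf A \<in> S) \<and> (\<forall>x s. s \<in> S \<longrightarrow> frm_imp x s \<in> S)"

definition open_sublocale :: "'a::complete_lattice \<Rightarrow> 'a set" where
  "open_sublocale x = {frm_imp x y | y. True}"

definition is_point :: "'a::complete_lattice \<Rightarrow> bool" where
  "is_point p \<longleftrightarrow> p \<noteq> top \<and> (\<forall>x y. inf x y \<le> p \<longrightarrow> x \<le> p \<or> y \<le> p)"

definition isolated_point :: "'a::complete_lattice \<Rightarrow> bool" where
  "isolated_point p \<longleftrightarrow> is_point p \<and> (\<exists>x. {top, p} = open_sublocale x)"

end

theory Submission
  imports Defs
begin

text \<open>
  As \<open>a\<^sup>* = 0\<close>, \<open>a \<and> b \<noteq> 0\<close>, so regularity gives \<open>y \<noteq> 0\<close> with \<open>y \<prec> a \<and> b\<close>; every \<open>c \<le> y\<close>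
  then satisfies \<open>c \<prec> a\<close>, i.e. \<open>a \<or> c\<^sup>* = 1\<close>. It remains to split \<open>y\<close> into two disjoint
  nonzero parts. If that were impossible, \<open>y\<^sup>*\<close> would be a point. In a regular frame points
  are maximal, so every \<open>y \<rightarrow> z\<close>, lying above \<open>y\<^sup>*\<close>, is \<open>y\<^sup>*\<close> or \<open>1\<close>: the open sublocale of
  \<open>y\<close> is \<open>{1, y\<^sup>*}\<close> and \<open>y\<^sup>*\<close> is isolated.
\<close>

lemma frm_imp_greatest:
  fixes x y z :: "'a::complete_lattice"
  shows "inf z x \<le> y \<Longrightarrow> z \<le> frm_imp x y"
  unfolding frm_imp_def by (rule Sup_upper) simp

lemma frm_imp_self [simp]: "frm_imp x x = (top :: 'a::complete_lattice)"
  by (simp add: frm_imp_greatest top_le)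

lemma frame_inf_sup_distrib:
  fixes x y z :: "'a::complete_lattice"
  assumes "frame TYPE('a)"
  shows "inf x (sup y z) = sup (inf x y) (inf x z)"
  using assms unfolding frame_def by (metis Sup_insert Sup_empty sup_bot_right image_insert image_empty)

lemma frame_inf_frm_imp_le:
  fixes x y :: "'a::complete_lattice"
  assumes "frame TYPE('a)"
  shows "inf (frm_imp x y) x \<le> y"
proof -
  have "inf x (frm_imp x y) = Sup ((\<lambda>z. inf x z) ` {z. inf z x \<le> y})"
    using assms unfolding frame_def frm_imp_def by blast
  also have "\<dots> \<le> y" by (rule Sup_least) (auto simp: inf_commute)
  finally show ?thesis by (simp add: inf_commute)
qed

lemma frame_le_pc_iff:
  fixes x z :: "'a::complete_lattice"
  assumes "frame TYPE('a)"
  shows "z \<le> pc x \<longleftrightarrow> inf z x = bot"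
proof
  assume "z \<le> pc x"
  then have "inf z x \<le> inf (pc x) x" by (rule inf_mono) simp
  also have "\<dots> \<le> bot" unfolding pc_def by (rule frame_inf_frm_imp_le[OF assms])
  finally show "inf z x = bot" by (rule bot_unique[THEN iffD1])
next
  assume "inf z x = bot"
  then show "z \<le> pc x" unfolding pc_def by (intro frm_imp_greatest) simp
qed

lemma frame_inf_pc [simp]:
  fixes x :: "'a::complete_lattice"
  assumes "frame TYPE('a)"
  shows "inf x (pc x) = bot"
  using frame_le_pc_iff[OF assms, of "pc x" x] by (simp add: inf_commute)

lemma frame_pc_antimono:
  fixes y z :: "'a::complete_lattice"
  assumes "frame TYPE('a)" and "z \<le> y"
  shows "pc y \<le> pc z"
  using assms frame_le_pc_iff[OF assms(1)] by (metis inf_mono order_refl bot_unique)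

lemma frame_pc_le_frm_imp:
  fixes y z :: "'a::complete_lattice"
  assumes "frame TYPE('a)"
  shows "pc y \<le> frm_imp y z"
  using assms by (intro frm_imp_greatest) (simp add: inf_commute)

lemma frame_rather_below_le:
  fixes x y :: "'a::complete_lattice"
  assumes "frame TYPE('a)" and "rather_below y x"
  shows "y \<le> x"
proof -
  have "y = inf y (sup (pc y) x)"
    using assms(2) unfolding rather_below_def by simp
  also have "\<dots> = inf y x"
    by (simp add: frame_inf_sup_distrib[OF assms(1)] assms(1))
  finally show ?thesis by (metis inf.absorb_iff1)
qed

lemma frame_rather_below_mono:
  fixes x x' y y' :: "'a::complete_lattice"
  assumes "frame TYPE('a)" and "rather_below y x" and "y' \<le> y" and "x \<le> x'"
  shows "rather_below y' x'"
proof -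
  have "sup (pc y) x \<le> sup (pc y') x'"
    using frame_pc_antimono[OF assms(1,3)] assms(4) by (rule sup_mono)
  then show ?thesis using assms(2) unfolding rather_below_def by (simp add: top_le)
qed

lemma regular_frame_rather_below_not_le:
  fixes p x :: "'a::complete_lattice"
  assumes "regular_frame TYPE('a)" and "\<not> x \<le> p"
  obtains r where "rather_below r x" and "\<not> r \<le> p"
proof -
  have "x = Sup {r. rather_below r x}"
    using assms(1) unfolding regular_frame_def by blast
  with assms(2) show ?thesis using that by (metis (mono_tags) Sup_least mem_Collect_eq)
qed

lemma regular_frame_point_maximal:
  fixes p w :: "'a::complete_lattice"
  assumes fr: "frame TYPE('a)" and reg: "regular_frame TYPE('a)"
    and pt: "is_point p" and "p \<le> w"
  shows "w = p \<or> w = top"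
proof (cases "w \<le> p")
  case True
  with \<open>p \<le> w\<close> show ?thesis by simp
next
  case False
  then obtain r where r: "rather_below r w" "\<not> r \<le> p"
    by (rule regular_frame_rather_below_not_le[OF reg])
  have "inf r (pc r) \<le> p" by (simp add: fr)
  then have "pc r \<le> p" using pt r(2) unfolding is_point_def by blast
  with r(1) \<open>p \<le> w\<close> have "top \<le> w" unfolding rather_below_def
    by (metis le_sup_iff order_trans order_refl)
  then show ?thesis by (simp add: top_le)
qed

lemma regular_frame_open_sublocale_pc_point:
  fixes y :: "'a::complete_lattice"
  assumes fr: "frame TYPE('a)" and reg: "regular_frame TYPE('a)"
    and pt: "is_point (pc y)"
  shows "open_sublocale y = {top, pc y}"
proof
  show "open_sublocale y \<subseteq> {top, pc y}"
    unfolding open_sublocale_def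
    using regular_frame_point_maximal[OF fr reg pt frame_pc_le_frm_imp[OF fr]] by auto
  have "top = frm_imp y y" and "pc y = frm_imp y bot"
    unfolding pc_def by simp_all
  then show "{top, pc y} \<subseteq> open_sublocale y"
    unfolding open_sublocale_def by blast
qed

lemma frame_pc_is_point:
  fixes y :: "'a::complete_lattice"
  assumes fr: "frame TYPE('a)" and "y \<noteq> bot"
    and indecomposable: "\<And>c d. c \<le> y \<Longrightarrow> d \<le> y \<Longrightarrow> inf c d = bot \<Longrightarrow> c = bot \<or> d = bot"
  shows "is_point (pc y)"
  unfolding is_point_def
proof (intro conjI allI impI)
  show "pc y \<noteq> top"
    using frame_inf_pc[OF fr, of y] \<open>y \<noteq> bot\<close> by auto
next
  fix x z
  assume "inf x z \<le> pc y"
  then have "inf (inf x y) (inf z y) = bot"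
    using frame_le_pc_iff[OF fr] by (simp add: inf_aci)
  then have "inf x y = bot \<or> inf z y = bot"
    using indecomposable by simp
  then show "x \<le> pc y \<or> z \<le> pc y"
    using frame_le_pc_iff[OF fr] by blast
qed

lemma regular_frame_no_isolated_split:
  fixes y :: "'a::complete_lattice"
  assumes fr: "frame TYPE('a)" and reg: "regular_frame TYPE('a)"
    and noiso: "\<forall>p::'a. \<not> isolated_point p" and "y \<noteq> bot"
  obtains c d where "c \<noteq> bot" "c \<le> y" "d \<noteq> bot" "d \<le> y" "inf c d = bot"
proof (rule ccontr)
  assume "\<not> thesis"
  with that have "is_point (pc y)"
    using frame_pc_is_point[OF fr \<open>y \<noteq> bot\<close>] by blast
  moreover from this have "{top, pc y} = open_sublocale y"
    using regular_frame_open_sublocale_pc_point[OF fr reg] by simp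
  ultimately have "isolated_point (pc y)"
    unfolding isolated_point_def by blast
  with noiso show False by blast
qed

theorem lemma5p1:
  fixes a b :: "'a::complete_lattice"
  assumes "frame TYPE('a)"
    and "regular_frame TYPE('a)"
    and "\<forall>p::'a. \<not> isolated_point p"
    and "pc a = bot"
    and "b \<noteq> bot"
  shows "\<exists>c d. c \<noteq> bot \<and> c \<le> b \<and> d \<noteq> bot \<and> d \<le> b \<and> inf c d = bot
              \<and> sup a (pc c) = top \<and> sup a (pc d) = top"
proof -
  note fr = assms(1)
  have "\<not> inf a b \<le> bot"
    using frame_le_pc_iff[OF fr, of b a] assms(4,5) by (simp add: inf_commute bot_unique)
  then obtain y where y: "rather_below y (inf a b)" "y \<noteq> bot"
    by (rule regular_frame_rather_below_not_le[OF assms(2)]) simp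
  obtain c d where cd: "c \<noteq> bot" "c \<le> y" "d \<noteq> bot" "d \<le> y" "inf c d = bot"
    using assms(1-3) y(2) by (rule regular_frame_no_isolated_split)
  have "c \<le> b" "d \<le> b"
    using cd frame_rather_below_le[OF fr y(1)] by (meson le_inf_iff order_trans)+
  moreover have "rather_below c a" "rather_below d a"
    using frame_rather_below_mono[OF fr y(1)] cd by auto
  ultimately show ?thesis
    using cd unfolding rather_below_def by (metis sup_commute)
qed

end
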